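(* Let $(R,\mathfrak{m})$ be a Noetherian local ring and let $I$ be an ideal of $R$. Let $N>\mathrm{AR}(\mathfrak{m},I\subseteq R)$. If $J$ is an ideal of $R$ such that $I+\mathfrak{m}^N=J+\mathfrak{m}^N$, then $\mu(I)\le\mu(J)$.
   Context: $\mu(-)$ denotes the minimal number of generators. $\mathrm{AR}(\mathfrak{m},I\subseteq R)$ is the least integer $s$ with $\mathfrak{m}^n\cap I=\mathfrak{m}^{n-s}(\mathfrak{m}^s\cap I)$ for all $n\ge s$. *)

theory Defs
  imports "HOL-Algebra.Ideal_Product" "HOL-Algebra.Ring_Divisibility"
begin

fun ideal_pow :: "('a, 'b) ring_scheme \<Rightarrow> 'a set \<Rightarrow> nat \<Rightarrow> 'a set" where
  "ideal_pow R I 0 = carrier R"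
| "ideal_pow R I (Suc n) = ideal_prod R (ideal_pow R I n) I"

definition local_ring :: "('a, 'b) ring_scheme \<Rightarrow> 'a set \<Rightarrow> bool" where
  "local_ring R m \<longleftrightarrow> cring R \<and> maximalideal m R \<and> (\<forall>M. maximalideal M R \<longrightarrow> M = m)"

definition min_gens :: "('a, 'b) ring_scheme \<Rightarrow> 'a set \<Rightarrow> nat" where
  "min_gens R I = (LEAST n. \<exists>S. finite S \<and> card S = n \<and> S \<subseteq> carrier R \<and> genideal R S = I)"

definition AR_number :: "('a, 'b) ring_scheme \<Rightarrow> 'a set \<Rightarrow> 'a set \<Rightarrow> nat" where
  "AR_number R m I = (LEAST s. \<forall>n\<ge>s.
      ideal_pow R m n \<inter> I = ideal_prod R (ideal_pow R m (n - s)) (ideal_pow R m s \<inter> I))"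

end

theory Submission
  imports Defs "HOL-Library.Ramsey" "HOL-Library.Function_Algebras"
begin

text \<open>
  Let \<open>s = AR(m, I) < N\<close>. The Artin--Rees equality gives \<open>m^N \<inter> I = m^(N - s) (m^s \<inter> I) \<subseteq> m I\<close>.
  Write each element of a minimal generating set of \<open>J\<close> as an element of \<open>I\<close> plus an element of
  \<open>m^N\<close>, and let \<open>K \<subseteq> I\<close> be the ideal generated by these elements of \<open>I\<close>. Then \<open>I \<subseteq> K + m^N\<close>,
  hence \<open>I \<subseteq> K + (m^N \<inter> I) \<subseteq> K + m I\<close>, so \<open>K = I\<close> by Nakayama's lemma and \<open>\<mu>(I) \<le> \<mu>(J)\<close>.

  As \<open>AR(m, I)\<close> is defined as a least element, this needs the Artin--Rees lemma itself. If
  \<open>m = (x_0, \<dots>, x_(r-1))\<close>, every element of \<open>m^n\<close> is the value of a form of degree \<open>n\<close> in the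
  \<open>x_i\<close>. The ideal \<open>LC(\<alpha>)\<close> of coefficients of \<open>x^\<alpha>\<close> in forms with value in \<open>I\<close> and no
  lexicographically larger terms grows with \<open>\<alpha>\<close>, so by Dickson's lemma and the ascending chain
  condition only finitely many \<open>\<alpha>\<close> have \<open>LC(\<alpha>) \<noteq> LC(\<alpha>')\<close> for all \<open>\<alpha>' < \<alpha>\<close>. Beyond their
  degrees, the leading term of a form with value in \<open>m^n \<inter> I\<close> can be cancelled by
  \<open>x^(\<alpha> - \<alpha>')\<close> times a form of lower degree with value in \<open>I\<close>; this gives
  \<open>m^n \<inter> I \<subseteq> m (m^(n - 1) \<inter> I)\<close>.
\<close>

no_notation Sum_Type.Plus (infixr \<open><+>\<close> 65) \<comment> \<open>\<open><+>\<close> is the sum of ideals\<close>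

section \<open>Sums, products and powers of ideals\<close>

context ring
begin

lemma ideal_finsum_closed:
  assumes K: "ideal K R" and "finite A" "\<And>a. a \<in> A \<Longrightarrow> f a \<in> K"
  shows "finsum R f A \<in> K"
  using assms(2,3)
proof (induct A rule: finite_induct)
  case empty
  then show ?case using K by (simp add: additive_subgroup.zero_closed ideal.axioms(1))
next
  case (insert a A)
  then have "f \<in> A \<rightarrow> carrier R" "f a \<in> carrier R" using ideal.Icarr[OF K] by blast+
  then show ?case
    using insert K by (simp add: finsum_insert additive_subgroup.a_closed ideal.axioms(1))
qed

lemma ideal_pow_is_ideal: "ideal m R \<Longrightarrow> ideal (ideal_pow R m n) R"
  by (induct n) (auto intro: oneideal ideal_prod_is_ideal)

lemma ideal_prod_mono:
  assumes "A \<subseteq> A'" "B \<subseteq> B'"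
  shows "A \<cdot> B \<subseteq> A' \<cdot> B'"
proof
  fix s assume "s \<in> A \<cdot> B"
  then show "s \<in> A' \<cdot> B'"
    by (induct s rule: ideal_prod.induct) (use assms in \<open>auto intro: ideal_prod.intros\<close>)
qed

lemma ideal_pow_add:
  assumes m: "ideal m R"
  shows "ideal_pow R m a \<cdot> ideal_pow R m b = ideal_pow R m (a + b)"
proof (induct b)
  case 0
  then show ?case using ideal_prod_one[OF ideal_pow_is_ideal[OF m]] by simp
next
  case (Suc b)
  then show ?case
    using ideal_prod_assoc[OF ideal_pow_is_ideal[OF m] ideal_pow_is_ideal[OF m] m, symmetric] by simp
qed

lemma ideal_pow_Suc_subset: "ideal m R \<Longrightarrow> ideal_pow R m (Suc n) \<subseteq> m"
  using ideal_prod_inter[OF ideal_pow_is_ideal] by force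

lemma mem_set_add_iff: "z \<in> A <+> B \<longleftrightarrow> (\<exists>a\<in>A. \<exists>b\<in>B. z = a \<oplus> b)"
  by (auto simp: set_add_def')

lemma subset_set_add_left: "ideal B R \<Longrightarrow> A \<subseteq> carrier R \<Longrightarrow> A \<subseteq> A <+> B"
  by (force simp: mem_set_add_iff intro: additive_subgroup.zero_closed ideal.axioms(1))

lemma subset_set_add_right: "ideal A R \<Longrightarrow> B \<subseteq> carrier R \<Longrightarrow> B \<subseteq> A <+> B"
  by (force simp: mem_set_add_iff intro: additive_subgroup.zero_closed ideal.axioms(1))

lemma set_add_subset_ideal: "ideal C R \<Longrightarrow> A \<subseteq> C \<Longrightarrow> B \<subseteq> C \<Longrightarrow> A <+> B \<subseteq> C"
  by (auto simp: mem_set_add_iff intro!: additive_subgroup.a_closed[OF ideal.axioms(1)])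

lemma set_add_mono: "A \<subseteq> A' \<Longrightarrow> B \<subseteq> B' \<Longrightarrow> A <+> B \<subseteq> A' <+> B'"
  unfolding mem_set_add_iff subset_iff by blast

lemma subset_set_add_inter:
  assumes I: "ideal I R" and "K \<subseteq> I" and "L \<subseteq> carrier R" and cover: "I \<subseteq> K <+> L"
  shows "I \<subseteq> K <+> (L \<inter> I)"
proof
  fix z assume z: "z \<in> I"
  then obtain k l where kl: "k \<in> K" "l \<in> L" "z = k \<oplus> l"
    using cover unfolding mem_set_add_iff subset_iff by blast
  with \<open>K \<subseteq> I\<close> have "k \<in> I" by blast
  have "l = \<ominus> k \<oplus> z"
    using kl \<open>k \<in> I\<close> \<open>L \<subseteq> carrier R\<close> ideal.Icarr[OF I]
    by (simp add: a_assoc[symmetric] l_neg subsetD)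
  also have "\<dots> \<in> I"
    using \<open>k \<in> I\<close> z by (simp add: I additive_subgroup.a_closed additive_subgroup.a_inv_closed ideal.axioms(1))
  finally show "z \<in> K <+> (L \<inter> I)" using kl by (auto simp: mem_set_add_iff)
qed

end

lemma (in abelian_group) set_add_assoc:
  "A \<subseteq> carrier G \<Longrightarrow> B \<subseteq> carrier G \<Longrightarrow> C \<subseteq> carrier G \<Longrightarrow> (A <+> B) <+> C = A <+> (B <+> C)"
  unfolding set_add_def by (rule add.set_mult_assoc) auto

context cring
begin

lemma ideal_criterion:
  assumes sub: "K \<subseteq> carrier R" and zero: "\<zero> \<in> K"
    and add: "\<And>a b. a \<in> K \<Longrightarrow> b \<in> K \<Longrightarrow> a \<oplus> b \<in> K"
    and smult: "\<And>a c. a \<in> K \<Longrightarrow> c \<in> carrier R \<Longrightarrow> c \<otimes> a \<in> K"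
  shows "ideal K R"
proof (rule idealI)
  show "ring R" by (rule ring_axioms)
  have "\<ominus> a \<in> K" if "a \<in> K" for a
    using smult[OF that, of "\<ominus> \<one>"] that sub by (simp add: l_minus subsetD)
  then show "subgroup K (add_monoid R)"
    by (intro add.subgroupI) (use sub zero add in auto)
  fix a c assume "a \<in> K" "c \<in> carrier R"
  then show "c \<otimes> a \<in> K" "a \<otimes> c \<in> K"
    using smult[of a c] sub m_comm[of a c] by (auto simp del: m_comm)
qed

lemma colon_ideal_is_ideal:
  assumes K: "ideal K R" and a: "a \<in> carrier R"
  shows "ideal {j \<in> carrier R. a \<otimes> j \<in> K} R"
proof (rule ideal_criterion)
  show "\<zero> \<in> {j \<in> carrier R. a \<otimes> j \<in> K}"
    using a K by (simp add: additive_subgroup.zero_closed ideal.axioms(1))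
next
  fix u v assume "u \<in> {j \<in> carrier R. a \<otimes> j \<in> K}" "v \<in> {j \<in> carrier R. a \<otimes> j \<in> K}"
  then show "u \<oplus> v \<in> {j \<in> carrier R. a \<otimes> j \<in> K}"
    using a K by (simp add: r_distr additive_subgroup.a_closed ideal.axioms(1))
next
  fix u c assume "u \<in> {j \<in> carrier R. a \<otimes> j \<in> K}" "c \<in> carrier R"
  then show "c \<otimes> u \<in> {j \<in> carrier R. a \<otimes> j \<in> K}"
    using a ideal.I_l_closed[OF K, of "a \<otimes> u" c] by (simp add: m_lcomm)
qed auto

lemma ideal_pow_Suc_left: "ideal m R \<Longrightarrow> ideal_pow R m (Suc n) = m \<cdot> ideal_pow R m n"
  using ideal_prod_commute[OF ideal_pow_is_ideal] by simp

lemma genideal_insert: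
  assumes y: "y \<in> carrier R" and Y: "Y \<subseteq> carrier R"
  shows "Idl (insert y Y) = Idl Y <+> PIdl y"
proof
  have "insert y Y \<subseteq> Idl Y <+> PIdl y"
    using subset_set_add_left[OF cgenideal_ideal[OF y], of "Idl Y"]
      subset_set_add_right[OF genideal_ideal[OF Y], of "PIdl y"]
      genideal_self[OF Y] cgenideal_self[OF y] ideal.Icarr[OF genideal_ideal[OF Y]]
      ideal.Icarr[OF cgenideal_ideal[OF y]]
    by blast
  then show "Idl (insert y Y) \<subseteq> Idl Y <+> PIdl y"
    by (intro genideal_minimal add_ideals genideal_ideal cgenideal_ideal y Y)
next
  have yY: "insert y Y \<subseteq> carrier R" using y Y by blast
  show "Idl Y <+> PIdl y \<subseteq> Idl (insert y Y)"
    by (intro set_add_subset_ideal genideal_ideal[OF yY] subset_Idl_subset[OF yY]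
        cgenideal_minimal genideal_self[OF yY, THEN subsetD]) auto
qed

end

section \<open>Nakayama's lemma over a Noetherian local ring\<close>

lemma (in noetherian_ring) exists_maximalideal_superset:
  assumes J: "ideal J R" and "\<one> \<notin> J"
  obtains M where "maximalideal M R" "J \<subseteq> M"
proof -
  let ?A = "{K. ideal K R \<and> J \<subseteq> K \<and> \<one> \<notin> K}"
  have "\<exists>M\<in>?A. \<forall>X\<in>?A. M \<subseteq> X \<longrightarrow> X = M"
  proof (rule Zorn_Lemma2, rule ballI)
    fix C assume C: "C \<in> chains ?A"
    show "\<exists>U\<in>?A. \<forall>X\<in>C. X \<subseteq> U"
    proof (cases "C = {}")
      case True
      then show ?thesis using assms by auto
    next
      case False
      have "subset.chain {I. ideal I R} C"
        using C unfolding chains_def chain_subset_def pred_on.chain_def by blast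
      then have "\<Union>C \<in> C" using ideal_chain_is_trivial False by blast
      then show ?thesis using C unfolding chains_def by blast
    qed
  qed
  then obtain M where M: "M \<in> ?A" and max: "\<forall>X\<in>?A. M \<subseteq> X \<longrightarrow> X = M" by blast
  have "maximalideal M R"
  proof (rule maximalidealI)
    show "ideal M R" "carrier R \<noteq> M" using M by auto
    fix K assume K: "ideal K R" "M \<subseteq> K" "K \<subseteq> carrier R"
    show "K = M \<or> K = carrier R"
      using ideal.one_imp_carrier[OF K(1)] max K M by blast
  qed
  with M that show thesis by blast
qed

context cring
begin

lemma local_ring_one_minus_unit:
  assumes loc: "local_ring R m" and noeth: "noetherian_ring R" and a: "a \<in> m"
  shows "\<one> \<ominus> a \<in> Units R"
proof (rule ccontr)
  interpret M: maximalideal m R using loc unfolding local_ring_def by blast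
  have ac: "a \<in> carrier R" using a M.Icarr by blast
  let ?u = "\<one> \<ominus> a"
  have uc: "?u \<in> carrier R" using ac by simp
  assume not_unit: "?u \<notin> Units R"
  have "\<one> \<notin> PIdl ?u"
  proof
    assume "\<one> \<in> PIdl ?u"
    then obtain c where c: "c \<in> carrier R" "\<one> = c \<otimes> ?u" unfolding cgenideal_def by blast
    then have "?u \<in> Units R" unfolding Units_def using uc m_comm[OF c(1) uc] by auto
    with not_unit show False by contradiction
  qed
  then obtain M where "maximalideal M R" "PIdl ?u \<subseteq> M"
    using noetherian_ring.exists_maximalideal_superset[OF noeth cgenideal_ideal[OF uc]] by blast
  then have "?u \<in> m" using loc cgenideal_self[OF uc] unfolding local_ring_def by blast
  then have "?u \<oplus> a \<in> m" using a M.a_closed by blast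
  moreover have "?u \<oplus> a = \<one>" using ac by (simp add: minus_eq a_assoc l_neg)
  ultimately show False using M.one_imp_carrier M.I_notcarr by simp
qed

lemma mem_ideal_prod_set_add_PIdl:
  assumes m: "ideal m R" and K: "ideal K R" and y: "y \<in> carrier R"
    and w: "w \<in> m \<cdot> (K <+> PIdl y)"
  shows "\<exists>k\<in>K. \<exists>a\<in>m. w = k \<oplus> a \<otimes> y"
  using w
proof (induct w rule: ideal_prod.induct)
  case (prod i j)
  obtain k d where kd: "k \<in> K" "d \<in> PIdl y" "j = k \<oplus> d"
    using prod(2) unfolding mem_set_add_iff by blast
  obtain c where c: "c \<in> carrier R" "d = c \<otimes> y" using kd(2) unfolding cgenideal_def by blast
  have ic: "i \<in> carrier R" and kc: "k \<in> carrier R"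
    using ideal.Icarr[OF m prod(1)] ideal.Icarr[OF K kd(1)] .
  have "i \<otimes> j = i \<otimes> k \<oplus> (i \<otimes> c) \<otimes> y"
    unfolding kd(3) c(2) using ic kc c(1) y by (simp add: r_distr m_assoc)
  moreover have "i \<otimes> k \<in> K" using ideal.I_l_closed[OF K kd(1) ic] .
  moreover have "i \<otimes> c \<in> m" using ideal.I_r_closed[OF m prod(1) c(1)] .
  ultimately show ?case by blast
next
  case (sum s1 s2)
  then obtain k1 a1 k2 a2 where ka: "k1 \<in> K" "a1 \<in> m" "s1 = k1 \<oplus> a1 \<otimes> y"
    "k2 \<in> K" "a2 \<in> m" "s2 = k2 \<oplus> a2 \<otimes> y" by blast
  have "s1 \<oplus> s2 = (k1 \<oplus> k2) \<oplus> (a1 \<oplus> a2) \<otimes> y"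
    unfolding ka(3,6)
    using ideal.Icarr[OF K ka(1)] ideal.Icarr[OF K ka(4)] ideal.Icarr[OF m ka(2)] ideal.Icarr[OF m ka(5)] y
    by (simp add: l_distr a_ac)
  moreover have "k1 \<oplus> k2 \<in> K" using ideal.axioms(1)[OF K] ka(1,4) by (rule additive_subgroup.a_closed)
  moreover have "a1 \<oplus> a2 \<in> m" using ideal.axioms(1)[OF m] ka(2,5) by (rule additive_subgroup.a_closed)
  ultimately show ?case by blast
qed

lemma nakayama_principal:
  assumes loc: "local_ring R m" and noeth: "noetherian_ring R"
    and K: "ideal K R" and y: "y \<in> carrier R" and cover: "y \<in> K <+> m \<cdot> (K <+> PIdl y)"
  shows "y \<in> K"
proof -
  have m: "ideal m R" using loc unfolding local_ring_def maximalideal_def by blast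
  obtain k w where k: "k \<in> K" and w: "w \<in> m \<cdot> (K <+> PIdl y)" and y_kw: "y = k \<oplus> w"
    using cover unfolding mem_set_add_iff by blast
  obtain k' a where k': "k' \<in> K" and a: "a \<in> m" and w_eq: "w = k' \<oplus> a \<otimes> y"
    using mem_ideal_prod_set_add_PIdl[OF m K y w] by blast
  have ac: "a \<in> carrier R" using ideal.Icarr[OF m a] .
  have kk: "k \<oplus> k' \<in> K" using ideal.axioms(1)[OF K] k k' by (rule additive_subgroup.a_closed)
  have kkc: "k \<oplus> k' \<in> carrier R" using ideal.Icarr[OF K kk] .
  have "y = k \<oplus> (k' \<oplus> a \<otimes> y)" using y_kw unfolding w_eq .
  also have "\<dots> = (k \<oplus> k') \<oplus> a \<otimes> y"
    using ideal.Icarr[OF K k] ideal.Icarr[OF K k'] ac y by (simp add: a_assoc)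
  finally have y_eq: "y = (k \<oplus> k') \<oplus> a \<otimes> y" .
  have "(\<one> \<ominus> a) \<otimes> y = y \<ominus> a \<otimes> y" using ac y by (simp add: minus_eq l_distr l_minus)
  also have "\<dots> = ((k \<oplus> k') \<oplus> a \<otimes> y) \<ominus> a \<otimes> y" using arg_cong[OF y_eq, of "\<lambda>z. z \<ominus> a \<otimes> y"] .
  also have "\<dots> = k \<oplus> k'" using kkc ac y by (simp add: minus_eq a_assoc r_neg)
  finally have u_y: "(\<one> \<ominus> a) \<otimes> y = k \<oplus> k'" .
  have u: "\<one> \<ominus> a \<in> Units R" using local_ring_one_minus_unit[OF loc noeth a] .
  have uc: "\<one> \<ominus> a \<in> carrier R" and ic: "inv (\<one> \<ominus> a) \<in> carrier R" using u by auto
  have "y = (inv (\<one> \<ominus> a) \<otimes> (\<one> \<ominus> a)) \<otimes> y" using Units_l_inv[OF u] y by simp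
  also have "\<dots> = inv (\<one> \<ominus> a) \<otimes> (k \<oplus> k')" unfolding m_assoc[OF ic uc y] u_y ..
  also have "\<dots> \<in> K" using ideal.I_l_closed[OF K kk] u by simp
  finally show ?thesis .
qed

lemma nakayama_fin_gen:
  assumes loc: "local_ring R m" and noeth: "noetherian_ring R"
    and K: "ideal K R" and "K \<subseteq> I" and cover: "I \<subseteq> K <+> m \<cdot> I"
    and "finite Y" "Y \<subseteq> carrier R" "I = K <+> Idl Y"
  shows "I = K"
  using assms(6-8)
proof (induct Y rule: finite_induct)
  case empty
  have "Idl {} \<subseteq> K" by (rule genideal_minimal[OF K]) simp
  then have "I \<subseteq> K" using empty.prems(2) set_add_subset_ideal[OF K subset_refl] by simp
  then show ?case using \<open>K \<subseteq> I\<close> by blast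
next
  case (insert y Y)
  have y: "y \<in> carrier R" and Y: "Y \<subseteq> carrier R" using insert.prems(1) by auto
  have Kc: "K \<subseteq> carrier R" using ideal.Icarr[OF K] by blast
  define K' where "K' = K <+> Idl Y"
  have K': "ideal K' R" unfolding K'_def by (intro add_ideals K genideal_ideal Y)
  have I_eq: "I = K' <+> PIdl y"
    unfolding K'_def insert.prems(2) genideal_insert[OF y Y]
    using ideal.Icarr[OF genideal_ideal[OF Y]] ideal.Icarr[OF cgenideal_ideal[OF y]]
    by (intro set_add_assoc[symmetric] Kc subsetI) auto
  have "K \<subseteq> K'" unfolding K'_def by (rule subset_set_add_left[OF genideal_ideal[OF Y] Kc])
  have "PIdl y \<subseteq> I"
    unfolding I_eq using ideal.Icarr[OF cgenideal_ideal[OF y]] by (intro subset_set_add_right[OF K']) auto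
  then have "y \<in> I" using cgenideal_self[OF y] by blast
  moreover have "I \<subseteq> K' <+> m \<cdot> I"
    using cover set_add_mono[OF \<open>K \<subseteq> K'\<close> subset_refl] by (rule subset_trans)
  ultimately have "y \<in> K' <+> m \<cdot> (K' <+> PIdl y)" unfolding I_eq[symmetric] by blast
  then have "y \<in> K'" by (rule nakayama_principal[OF loc noeth K' y])
  then have "I \<subseteq> K'"
    unfolding I_eq by (intro set_add_subset_ideal[OF K'] cgenideal_minimal[OF K']) auto
  moreover have "K' \<subseteq> I"
    unfolding I_eq using ideal.Icarr[OF K'] by (intro subset_set_add_left[OF cgenideal_ideal[OF y]]) auto
  ultimately have "I = K <+> Idl Y" unfolding K'_def by blast
  then show ?case using insert.hyps(3) Y by blast
qed

lemma nakayama: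
  assumes loc: "local_ring R m" and noeth: "noetherian_ring R"
    and K: "ideal K R" and I: "ideal I R" and "K \<subseteq> I" and cover: "I \<subseteq> K <+> m \<cdot> I"
  shows "I = K"
proof -
  obtain Y where Y: "finite Y" "Y \<subseteq> carrier R" "I = Idl Y"
    using noetherian_ring.finetely_gen[OF noeth I] by blast
  have "I \<subseteq> K <+> I" using ideal.Icarr[OF I] by (intro subset_set_add_right[OF K]) auto
  moreover have "K <+> I \<subseteq> I" using set_add_subset_ideal[OF I \<open>K \<subseteq> I\<close> subset_refl] .
  ultimately have "I = K <+> Idl Y" using Y(3) by blast
  then show ?thesis by (rule nakayama_fin_gen[OF loc noeth K \<open>K \<subseteq> I\<close> cover Y(1,2)])
qed

end

section \<open>Dickson's lemma and monotone families of ideals\<close>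

text \<open>Exponent vectors in \<open>r\<close> variables are functions vanishing from \<open>r\<close> on; they are added,
  subtracted and compared pointwise.\<close>

definition exps :: "nat \<Rightarrow> (nat \<Rightarrow> nat) set" where
  "exps r = {\<alpha>. \<forall>i\<ge>r. \<alpha> i = 0}"

lemma exps_add: "\<alpha> \<in> exps r \<Longrightarrow> \<beta> \<in> exps r \<Longrightarrow> \<alpha> + \<beta> \<in> exps r"
  unfolding exps_def by auto

lemma exps_diff: "\<beta> \<in> exps r \<Longrightarrow> \<beta> - \<alpha> \<in> exps r"
  unfolding exps_def by auto

lemma add_diff_exp: "\<alpha> \<le> (\<beta> :: nat \<Rightarrow> nat) \<Longrightarrow> \<alpha> + (\<beta> - \<alpha>) = \<beta>"
  by (simp add: fun_eq_iff le_fun_def)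

lemma less_exps_ex_coord:
  assumes "\<beta> \<in> exps r" "\<alpha> < \<beta>"
  obtains i where "i < r" "\<alpha> i < \<beta> i"
proof -
  have "\<not> \<beta> \<le> \<alpha>" using assms(2) by (simp add: less_le_not_le)
  then obtain i where i: "\<alpha> i < \<beta> i" unfolding le_fun_def by (auto simp: not_le)
  have "i < r"
  proof (rule ccontr)
    assume "\<not> i < r"
    then have "\<beta> i = 0" using assms(1) unfolding exps_def by simp
    with i show False by simp
  qed
  with i that show thesis by blast
qed

lemma ramsey_subseq:
  fixes col :: "nat set \<Rightarrow> nat"
  assumes "\<And>i j. col {i, j} < s"
  shows "\<exists>(e :: nat \<Rightarrow> nat) t. strict_mono e \<and> t < s \<and> (\<forall>i j. i < j \<longrightarrow> col {e i, e j} = t)"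
proof -
  obtain Y t where Y: "infinite Y" "t < s" "\<forall>i\<in>Y. \<forall>j\<in>Y. i \<noteq> j \<longrightarrow> col {i, j} = t"
    using Ramsey2[of "UNIV :: nat set" col s] assms by auto
  define e where "e = enumerate Y"
  have e: "strict_mono e"
    unfolding strict_mono_def e_def using enumerate_mono[OF _ Y(1)] by blast
  have "\<forall>i j. i < j \<longrightarrow> col {e i, e j} = t"
  proof (intro allI impI)
    fix i j :: nat assume "i < j"
    have "e i \<in> Y" "e j \<in> Y" unfolding e_def using enumerate_in_set[OF Y(1)] by auto
    moreover have "e i \<noteq> e j" using strict_monoD[OF e \<open>i < j\<close>] by simp
    ultimately show "col {e i, e j} = t" using Y(3) by blast
  qed
  with e Y(2) show ?thesis by blast
qed

lemma dickson_subseq: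
  fixes b :: "nat \<Rightarrow> nat \<Rightarrow> nat" and r :: nat
  shows "\<exists>e :: nat \<Rightarrow> nat. strict_mono e \<and> (\<forall>i j k. i < j \<longrightarrow> k < r \<longrightarrow> b (e i) k \<le> b (e j) k)"
proof -
  txt \<open>Colour a pair \<open>i < j\<close> by \<open>0\<close> if \<open>b i \<le> b j\<close> on the first \<open>r\<close> coordinates, and otherwise by
    one more than the first coordinate where \<open>b j\<close> is smaller. A nonzero colour on all pairs from a
    subsequence would give a descending chain in \<open>\<nat>\<close>.\<close>
  define first_drop where "first_drop i j = (LEAST k. k < r \<and> b j k < b i k)" for i j
  define col where "col X = (if \<forall>k<r. b (Min X) k \<le> b (Max X) k then 0
      else Suc (first_drop (Min X) (Max X)))" for X
  have first_drop: "first_drop i j < r \<and> b j (first_drop i j) < b i (first_drop i j)"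
    if "\<not> (\<forall>k<r. b i k \<le> b j k)" for i j
  proof -
    have "\<exists>k. k < r \<and> b j k < b i k" using that by (auto simp: not_le)
    then show ?thesis unfolding first_drop_def by (rule LeastI_ex)
  qed
  have "col {i, j} < Suc r" for i j
    using first_drop[of "Min {i, j}" "Max {i, j}"] unfolding col_def by auto
  then obtain e :: "nat \<Rightarrow> nat" and t where e: "strict_mono e" and col_e: "\<forall>i j. i < j \<longrightarrow> col {e i, e j} = t"
    using ramsey_subseq[of col "Suc r"] by blast
  have Min_Max: "Min {e i, e j} = e i" "Max {e i, e j} = e j" if "i < j" for i j
    using strict_monoD[OF e that] by (simp_all add: min_def max_def)
  show ?thesis
  proof (cases t)
    case 0
    have "b (e i) k \<le> b (e j) k" if "i < j" "k < r" for i j k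
      using col_e[rule_format, OF that(1)] that(2) 0 unfolding col_def Min_Max[OF that(1)]
      by (simp split: if_splits)
    with e show ?thesis by blast
  next
    case (Suc k)
    have "b (e (Suc n)) k < b (e n) k" for n
    proof -
      have "col {e n, e (Suc n)} = Suc k" using col_e[rule_format, OF lessI] Suc by simp
      then have "\<not> (\<forall>k<r. b (e n) k \<le> b (e (Suc n)) k)" "first_drop (e n) (e (Suc n)) = k"
        unfolding col_def Min_Max[OF lessI] by (simp_all split: if_splits)
      then show ?thesis using first_drop[of "e n" "e (Suc n)"] by simp
    qed
    then show ?thesis using wf_no_infinite_down_chainE[OF wf_less, of "\<lambda>n. b (e n) k"] by auto
  qed
qed

lemma (in noetherian_ring) no_strictly_increasing_ideal_chain:
  assumes ideal: "\<And>n. ideal (C n) R" and strict: "\<And>n. C n \<subset> C (Suc n)"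
  shows False
proof -
  have mono: "C i \<subseteq> C j" if "i \<le> j" for i j
    using lift_Suc_mono_le[of C, OF _ that] strict by blast
  have "X \<subseteq> Y \<or> Y \<subseteq> X" if XY: "X \<in> range C" "Y \<in> range C" for X Y
  proof -
    obtain i j where "X = C i" "Y = C j" using XY by blast
    then show ?thesis using mono[of i j] mono[of j i] by (cases "i \<le> j") auto
  qed
  then have "subset.chain {I. ideal I R} (range C)"
    unfolding subset_chain_def using ideal by blast
  then have "\<Union>(range C) \<in> range C" by (intro ideal_chain_is_trivial) auto
  then obtain k where "\<Union>(range C) = C k" by blast
  then show False using strict[of k] by blast
qed

lemma (in noetherian_ring) mono_ideal_family_finite_jumps:
  fixes f :: "(nat \<Rightarrow> nat) \<Rightarrow> 'a set"
  assumes ideal: "\<And>\<alpha>. ideal (f \<alpha>) R" and mono: "mono_on (exps r) f"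
  shows "finite {\<beta> \<in> exps r. \<forall>\<alpha>\<in>exps r. \<alpha> < \<beta> \<longrightarrow> f \<alpha> \<noteq> f \<beta>}" (is "finite ?B")
proof (rule ccontr)
  assume "infinite ?B"
  then obtain b :: "nat \<Rightarrow> nat \<Rightarrow> nat" where b: "inj b" "range b \<subseteq> ?B"
    by (meson infinite_iff_countable_subset)
  obtain e :: "nat \<Rightarrow> nat" where e: "strict_mono e" and le: "\<forall>i j k. i < j \<longrightarrow> k < r \<longrightarrow> b (e i) k \<le> b (e j) k"
    using dickson_subseq[where b = b and r = r] by blast
  have "f (b (e n)) \<subset> f (b (e (Suc n)))" for n
  proof -
    have "b (e n) \<in> ?B" "b (e (Suc n)) \<in> ?B" using b(2) by auto
    then have B: "b (e n) \<in> exps r" "b (e (Suc n)) \<in> exps r"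
      and jump: "\<And>\<alpha>. \<alpha> \<in> exps r \<Longrightarrow> \<alpha> < b (e (Suc n)) \<Longrightarrow> f \<alpha> \<noteq> f (b (e (Suc n)))"
      by auto
    have le_Suc: "b (e n) \<le> b (e (Suc n))"
      unfolding le_fun_def
    proof
      fix k show "b (e n) k \<le> b (e (Suc n)) k"
      proof (cases "k < r")
        case True
        then show ?thesis using le by simp
      next
        case False
        then show ?thesis using B(1) unfolding exps_def by simp
      qed
    qed
    moreover have "b (e n) \<noteq> b (e (Suc n))"
      using inj_eq[OF b(1)] strict_monoD[OF e, of n "Suc n"] by simp
    ultimately have "f (b (e n)) \<noteq> f (b (e (Suc n)))" using jump[OF B(1)] by simp
    moreover have "f (b (e n)) \<subseteq> f (b (e (Suc n)))" using mono_onD[OF mono B le_Suc] .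
    ultimately show ?thesis by blast
  qed
  then show False using no_strictly_increasing_ideal_chain[of "\<lambda>n. f (b (e n))"] ideal by blast
qed

definition lex_less :: "(nat \<Rightarrow> nat) \<Rightarrow> (nat \<Rightarrow> nat) \<Rightarrow> bool" where
  "lex_less \<alpha> \<beta> \<longleftrightarrow> (\<exists>k. \<alpha> k < \<beta> k \<and> (\<forall>j<k. \<alpha> j = \<beta> j))"

lemma lex_less_irrefl: "\<not> lex_less \<alpha> \<alpha>"
  unfolding lex_less_def by auto

lemma lex_less_trans:
  assumes "lex_less \<alpha> \<beta>" "lex_less \<beta> \<gamma>"
  shows "lex_less \<alpha> \<gamma>"
proof -
  obtain k1 k2 where k: "\<alpha> k1 < \<beta> k1" "\<forall>j<k1. \<alpha> j = \<beta> j" "\<beta> k2 < \<gamma> k2" "\<forall>j<k2. \<beta> j = \<gamma> j"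
    using assms unfolding lex_less_def by blast
  show ?thesis
  proof (cases k1 k2 rule: linorder_cases)
    case less
    then show ?thesis using k unfolding lex_less_def by (intro exI[of _ k1]) auto
  next
    case equal
    then show ?thesis using k unfolding lex_less_def by (intro exI[of _ k1]) auto
  next
    case greater
    then show ?thesis using k unfolding lex_less_def by (intro exI[of _ k2]) auto
  qed
qed

lemma lex_less_linear: "\<alpha> \<noteq> \<beta> \<Longrightarrow> lex_less \<alpha> \<beta> \<or> lex_less \<beta> \<alpha>"
proof -
  assume "\<alpha> \<noteq> \<beta>"
  then have ex: "\<exists>k. \<alpha> k \<noteq> \<beta> k" by auto
  define k where "k = (LEAST k. \<alpha> k \<noteq> \<beta> k)"
  have "\<alpha> k \<noteq> \<beta> k" "\<forall>j<k. \<alpha> j = \<beta> j"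
    unfolding k_def using LeastI_ex[OF ex] not_less_Least by auto
  then show ?thesis unfolding lex_less_def by (metis linorder_neqE_nat)
qed

lemma lex_less_add_right: "lex_less (\<alpha> + \<gamma>) (\<beta> + \<gamma>) \<longleftrightarrow> lex_less \<alpha> \<beta>"
  unfolding lex_less_def by auto

lemma finite_lex_maximal:
  assumes "finite S" "S \<noteq> {}"
  shows "\<exists>\<beta>\<in>S. \<forall>\<gamma>\<in>S. \<not> lex_less \<beta> \<gamma>"
  using assms
proof (induct S rule: finite_ne_induct)
  case (singleton x)
  then show ?case using lex_less_irrefl by auto
next
  case (insert x S)
  then obtain \<beta> where \<beta>: "\<beta> \<in> S" "\<forall>\<gamma>\<in>S. \<not> lex_less \<beta> \<gamma>" by blast
  show ?case
  proof (cases "lex_less \<beta> x")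
    case True
    then have "\<forall>\<gamma>\<in>insert x S. \<not> lex_less x \<gamma>"
      using \<beta>(2) lex_less_trans lex_less_irrefl by blast
    then show ?thesis by blast
  next
    case False
    then show ?thesis using \<beta> by blast
  qed
qed

section \<open>Forms in finitely many ring elements\<close>

locale forms = cring R for R (structure) +
  fixes r :: nat and x :: "nat \<Rightarrow> 'a"
  assumes gens_closed: "\<And>i. x i \<in> carrier R"
begin

definition exp_deg :: "(nat \<Rightarrow> nat) \<Rightarrow> nat" where
  "exp_deg \<alpha> = (\<Sum>i<r. \<alpha> i)"

definition exps_of_deg :: "nat \<Rightarrow> (nat \<Rightarrow> nat) set" where
  "exps_of_deg n = {\<alpha> \<in> exps r. exp_deg \<alpha> = n}"

definition xpow :: "(nat \<Rightarrow> nat) \<Rightarrow> 'a" where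
  "xpow \<alpha> = (\<Otimes>i\<in>{..<r}. x i [^] \<alpha> i)"

text \<open>A form of degree \<open>n\<close> in \<open>x 0, \<dots>, x (r - 1)\<close> is given by its coefficient function on
  exponent vectors; distinct forms may have the same value, as the \<open>x i\<close> satisfy relations.\<close>

definition is_form :: "nat \<Rightarrow> ((nat \<Rightarrow> nat) \<Rightarrow> 'a) \<Rightarrow> bool" where
  "is_form n F \<longleftrightarrow> (\<forall>\<alpha>. F \<alpha> \<in> carrier R) \<and> (\<forall>\<alpha>. \<alpha> \<notin> exps_of_deg n \<longrightarrow> F \<alpha> = \<zero>)"

definition eval_form :: "nat \<Rightarrow> ((nat \<Rightarrow> nat) \<Rightarrow> 'a) \<Rightarrow> 'a" where
  "eval_form n F = (\<Oplus>\<alpha>\<in>exps_of_deg n. F \<alpha> \<otimes> xpow \<alpha>)"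

definition shift_form :: "(nat \<Rightarrow> nat) \<Rightarrow> ((nat \<Rightarrow> nat) \<Rightarrow> 'a) \<Rightarrow> (nat \<Rightarrow> nat) \<Rightarrow> 'a" where
  "shift_form \<gamma> F \<delta> = (if \<gamma> \<le> \<delta> then F (\<delta> - \<gamma>) else \<zero>)"

definition unit_exp :: "nat \<Rightarrow> nat \<Rightarrow> nat" where
  "unit_exp i = (\<lambda>j. if j = i then 1 else 0)"

definition gens_ideal :: "'a set" where
  "gens_ideal = Idl (x ` {..<r})"

definition form_values :: "nat \<Rightarrow> 'a set" where
  "form_values n = {eval_form n F | F. is_form n F}"

lemma finite_exps_of_deg: "finite (exps_of_deg n)"
proof -
  have "\<alpha> i \<le> n" if "\<alpha> \<in> exps_of_deg n" "i < r" for \<alpha> i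
    using that member_le_sum[of i "{..<r}" \<alpha>] unfolding exps_of_deg_def exp_deg_def by simp
  then have "exps_of_deg n \<subseteq> {f. \<forall>i. (i \<in> {..<r} \<longrightarrow> f i \<in> {..n}) \<and> (i \<notin> {..<r} \<longrightarrow> f i = 0)}"
    unfolding exps_of_deg_def exps_def by auto
  moreover have "finite {f. \<forall>i. (i \<in> {..<r} \<longrightarrow> f i \<in> {..n}) \<and> (i \<notin> {..<r} \<longrightarrow> f i = (0::nat))}"
    by (rule finite_set_of_finite_funs) auto
  ultimately show ?thesis by (rule finite_subset)
qed

lemma exps_of_deg_0: "exps_of_deg 0 = {0}"
proof
  show "exps_of_deg 0 \<subseteq> {0}"
  proof
    fix \<alpha> assume \<alpha>: "\<alpha> \<in> exps_of_deg 0"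
    have "\<alpha> i = 0" for i
      using \<alpha> by (cases "i < r") (auto simp: exps_of_deg_def exps_def exp_deg_def)
    then show "\<alpha> \<in> {0}" by (simp add: fun_eq_iff)
  qed
qed (simp add: exps_of_deg_def exps_def exp_deg_def)

lemma exp_deg_add: "exp_deg (\<alpha> + \<beta>) = exp_deg \<alpha> + exp_deg \<beta>"
  unfolding exp_deg_def by (simp add: sum.distrib)

lemma unit_exp_in_exps: "i < r \<Longrightarrow> unit_exp i \<in> exps r"
  unfolding unit_exp_def exps_def by auto

lemma exp_deg_unit_exp: "i < r \<Longrightarrow> exp_deg (unit_exp i) = 1"
  unfolding exp_deg_def unit_exp_def by simp

lemma exp_deg_pos_split:
  assumes "0 < exp_deg \<gamma>"
  obtains i \<gamma>' where "i < r" "\<gamma> = \<gamma>' + unit_exp i" "exp_deg \<gamma> = Suc (exp_deg \<gamma>')"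
proof -
  obtain i where i: "i < r" "0 < \<gamma> i"
    using assms unfolding exp_deg_def by (metis lessThan_iff neq0_conv sum.neutral)
  define \<gamma>' where "\<gamma>' = \<gamma>(i := \<gamma> i - 1)"
  have "\<gamma> = \<gamma>' + unit_exp i" using i unfolding \<gamma>'_def unit_exp_def by (auto simp: fun_eq_iff)
  with i that show thesis using exp_deg_add[of \<gamma>' "unit_exp i"] exp_deg_unit_exp by simp
qed

lemma xpow_closed [simp]: "xpow \<alpha> \<in> carrier R"
  unfolding xpow_def by (auto intro: finprod_closed simp: gens_closed)

lemma xpow_add: "xpow (\<alpha> + \<beta>) = xpow \<alpha> \<otimes> xpow \<beta>"
  unfolding xpow_def by (simp add: nat_pow_mult[symmetric] gens_closed finprod_multf Pi_def)

lemma xpow_zero: "xpow 0 = \<one>"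
  unfolding xpow_def by (intro finprod_one_eqI) simp

lemma xpow_unit_exp:
  assumes "i < r"
  shows "xpow (unit_exp i) = x i"
proof -
  have "xpow (unit_exp i) = (\<Otimes>j\<in>{..<r}. if j = i then x j else \<one>)"
    unfolding xpow_def unit_exp_def by (rule finprod_cong') (auto simp: gens_closed)
  also have "\<dots> = x i"
    using finprod_singleton_swap[of i "{..<r}" x] assms by (auto simp: gens_closed)
  finally show ?thesis .
qed

lemma is_form_add: "is_form n F \<Longrightarrow> is_form n G \<Longrightarrow> is_form n (\<lambda>\<alpha>. F \<alpha> \<oplus> G \<alpha>)"
  unfolding is_form_def by auto

lemma is_form_smult: "c \<in> carrier R \<Longrightarrow> is_form n F \<Longrightarrow> is_form n (\<lambda>\<alpha>. c \<otimes> F \<alpha>)"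
  unfolding is_form_def by auto

lemma is_form_minus: "is_form n F \<Longrightarrow> is_form n G \<Longrightarrow> is_form n (\<lambda>\<alpha>. F \<alpha> \<ominus> G \<alpha>)"
  unfolding is_form_def by auto

lemma is_form_zero: "is_form n (\<lambda>\<alpha>. \<zero>)"
  unfolding is_form_def by auto

lemma eval_form_closed [simp]: "is_form n F \<Longrightarrow> eval_form n F \<in> carrier R"
  unfolding eval_form_def is_form_def by (auto intro: finsum_closed)

lemma eval_form_add: "is_form n F \<Longrightarrow> is_form n G \<Longrightarrow> eval_form n (\<lambda>\<alpha>. F \<alpha> \<oplus> G \<alpha>) = eval_form n F \<oplus> eval_form n G"
  unfolding eval_form_def is_form_def by (simp add: l_distr finsum_addf Pi_def)

lemma eval_form_smult: "c \<in> carrier R \<Longrightarrow> is_form n F \<Longrightarrow> eval_form n (\<lambda>\<alpha>. c \<otimes> F \<alpha>) = c \<otimes> eval_form n F"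
  unfolding eval_form_def is_form_def by (simp add: finsum_rdistr finite_exps_of_deg m_assoc Pi_def)

lemma eval_form_minus:
  assumes F: "is_form n F" and G: "is_form n G"
  shows "eval_form n (\<lambda>\<alpha>. F \<alpha> \<ominus> G \<alpha>) = eval_form n F \<ominus> eval_form n G"
proof -
  have "(\<lambda>\<alpha>. F \<alpha> \<ominus> G \<alpha>) = (\<lambda>\<alpha>. F \<alpha> \<oplus> (\<ominus> \<one>) \<otimes> G \<alpha>)"
    using G unfolding is_form_def by (auto simp: minus_eq l_minus)
  then show ?thesis
    using eval_form_add[OF F is_form_smult[OF _ G]] eval_form_smult[OF _ G, of "\<ominus> \<one>"] F G
    by (simp add: minus_eq l_minus)
qed

lemma eval_form_eq_zero:
  assumes "\<And>\<delta>. \<delta> \<in> exps_of_deg n \<Longrightarrow> F \<delta> = \<zero>"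
  shows "eval_form n F = \<zero>"
proof -
  have "eval_form n F = (\<Oplus>\<delta>\<in>exps_of_deg n. \<zero>)"
    unfolding eval_form_def by (rule finsum_cong') (auto simp: assms)
  then show ?thesis by simp
qed

lemma form_valuesI: "is_form n F \<Longrightarrow> eval_form n F \<in> form_values n"
  unfolding form_values_def by blast

lemma is_form_shift:
  assumes F: "is_form n F" and \<gamma>: "\<gamma> \<in> exps r"
  shows "is_form (n + exp_deg \<gamma>) (shift_form \<gamma> F)"
  unfolding is_form_def
proof safe
  fix \<alpha> show "shift_form \<gamma> F \<alpha> \<in> carrier R"
    using F unfolding is_form_def shift_form_def by auto
next
  fix \<delta> assume \<delta>: "\<delta> \<notin> exps_of_deg (n + exp_deg \<gamma>)"
  show "shift_form \<gamma> F \<delta> = \<zero>"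
  proof (cases "\<gamma> \<le> \<delta>")
    case True
    have "\<delta> - \<gamma> + \<gamma> = \<delta>" using add_diff_exp[OF True] by (simp add: add.commute)
    moreover have "\<alpha> + \<gamma> \<in> exps_of_deg (n + exp_deg \<gamma>)" if "\<alpha> \<in> exps_of_deg n" for \<alpha>
      using that exps_add[OF _ \<gamma>] exp_deg_add[of \<alpha> \<gamma>] unfolding exps_of_deg_def by simp
    ultimately have "\<delta> - \<gamma> \<notin> exps_of_deg n" using \<delta> by metis
    then show ?thesis using F True unfolding is_form_def shift_form_def by auto
  qed (simp add: shift_form_def)
qed

lemma shift_form_add_apply: "shift_form \<gamma> F (\<alpha> + \<gamma>) = F \<alpha>"
  unfolding shift_form_def by (simp add: le_fun_def)

lemma eval_form_shift:
  assumes F: "is_form n F" and \<gamma>: "\<gamma> \<in> exps r"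
  shows "eval_form (n + exp_deg \<gamma>) (shift_form \<gamma> F) = eval_form n F \<otimes> xpow \<gamma>"
proof -
  let ?h = "\<lambda>\<delta>. shift_form \<gamma> F \<delta> \<otimes> xpow \<delta>"
  have F_closed: "F \<alpha> \<in> carrier R" for \<alpha> using F unfolding is_form_def by auto
  then have shift_closed: "shift_form \<gamma> F \<alpha> \<in> carrier R" for \<alpha> unfolding shift_form_def by auto
  have "(\<lambda>\<alpha>. \<alpha> + \<gamma>) ` exps_of_deg n \<subseteq> exps_of_deg (n + exp_deg \<gamma>)"
    using \<gamma> exps_add exp_deg_add unfolding exps_of_deg_def by auto
  moreover have "shift_form \<gamma> F \<delta> = \<zero>"
    if \<delta>: "\<delta> \<in> exps_of_deg (n + exp_deg \<gamma>) - (\<lambda>\<alpha>. \<alpha> + \<gamma>) ` exps_of_deg n" for \<delta>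
  proof (cases "\<gamma> \<le> \<delta>")
    case True
    then have "\<delta> = (\<delta> - \<gamma>) + \<gamma>" using add_diff_exp[OF True] by (simp add: add.commute)
    then have "\<delta> - \<gamma> \<notin> exps_of_deg n" using \<delta> by (metis DiffD2 image_eqI)
    then show ?thesis using F True unfolding is_form_def shift_form_def by simp
  qed (simp add: shift_form_def)
  ultimately have "eval_form (n + exp_deg \<gamma>) (shift_form \<gamma> F) = (\<Oplus>\<delta>\<in>(\<lambda>\<alpha>. \<alpha> + \<gamma>) ` exps_of_deg n. ?h \<delta>)"
    unfolding eval_form_def
    by (intro add.finprod_mono_neutral_cong_right finite_exps_of_deg) (auto simp: shift_closed)
  also have "\<dots> = (\<Oplus>\<alpha>\<in>exps_of_deg n. ?h (\<alpha> + \<gamma>))"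
    by (rule finsum_reindex) (auto simp: shift_closed inj_on_def)
  also have "\<dots> = (\<Oplus>\<alpha>\<in>exps_of_deg n. (F \<alpha> \<otimes> xpow \<alpha>) \<otimes> xpow \<gamma>)"
    by (rule finsum_cong') (auto simp: shift_form_add_apply xpow_add F_closed m_assoc)
  also have "\<dots> = eval_form n F \<otimes> xpow \<gamma>"
    unfolding eval_form_def by (rule finsum_ldistr[symmetric]) (auto simp: finite_exps_of_deg F_closed)
  finally show ?thesis .
qed

lemma gens_ideal_is_ideal: "ideal gens_ideal R"
  unfolding gens_ideal_def by (rule genideal_ideal) (auto simp: gens_closed)

lemma gens_in_gens_ideal: "i < r \<Longrightarrow> x i \<in> gens_ideal"
  unfolding gens_ideal_def using genideal_self[of "x ` {..<r}"] gens_closed by blast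

lemma xpow_in_ideal_pow: "xpow \<alpha> \<in> ideal_pow R gens_ideal (exp_deg \<alpha>)"
proof (induct "exp_deg \<alpha>" arbitrary: \<alpha>)
  case 0
  then have "\<forall>i<r. \<alpha> i = 0" unfolding exp_deg_def by simp
  then have "xpow \<alpha> = \<one>" unfolding xpow_def by (intro finprod_one_eqI) simp
  then show ?case using 0 by (metis ideal_pow.simps(1) one_closed)
next
  case (Suc n)
  then obtain i \<alpha>' where \<alpha>: "i < r" "\<alpha> = \<alpha>' + unit_exp i" "exp_deg \<alpha>' = n"
    by (metis exp_deg_pos_split nat.inject zero_less_Suc)
  then have "xpow \<alpha> = xpow \<alpha>' \<otimes> x i" by (simp add: xpow_add xpow_unit_exp)
  also have "\<dots> \<in> ideal_pow R gens_ideal n \<cdot> gens_ideal"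
    using Suc(1)[of \<alpha>'] \<alpha> gens_in_gens_ideal by (auto intro: ideal_prod.prod)
  finally show ?case using Suc(2)[symmetric] by simp
qed

lemma eval_form_in_ideal_pow: "is_form n F \<Longrightarrow> eval_form n F \<in> ideal_pow R gens_ideal n"
  unfolding eval_form_def
proof (rule ideal_finsum_closed[OF ideal_pow_is_ideal[OF gens_ideal_is_ideal] finite_exps_of_deg])
  fix \<alpha> assume "is_form n F" "\<alpha> \<in> exps_of_deg n"
  then show "F \<alpha> \<otimes> xpow \<alpha> \<in> ideal_pow R gens_ideal n"
    using xpow_in_ideal_pow[of \<alpha>] ideal.I_l_closed[OF ideal_pow_is_ideal[OF gens_ideal_is_ideal]]
    unfolding is_form_def exps_of_deg_def by auto
qed

lemma form_values_is_ideal: "ideal (form_values n) R"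
proof (rule ideal_criterion)
  show "form_values n \<subseteq> carrier R" unfolding form_values_def by auto
  show "\<zero> \<in> form_values n"
    using form_valuesI[OF is_form_zero] eval_form_eq_zero by simp
  fix a b assume "a \<in> form_values n" "b \<in> form_values n"
  then obtain F G where F: "is_form n F" "a = eval_form n F" and G: "is_form n G" "b = eval_form n G"
    unfolding form_values_def by blast
  then show "a \<oplus> b \<in> form_values n"
    using form_valuesI[OF is_form_add[OF F(1) G(1)]] eval_form_add[OF F(1) G(1)] by simp
next
  fix a c assume "a \<in> form_values n" and c: "c \<in> carrier R"
  then obtain F where F: "is_form n F" "a = eval_form n F" unfolding form_values_def by blast
  then show "c \<otimes> a \<in> form_values n"
    using form_valuesI[OF is_form_smult[OF c F(1)]] eval_form_smult[OF c F(1)] by simp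
qed

lemma ideal_pow_subset_form_values: "ideal_pow R gens_ideal n \<subseteq> form_values n"
proof (induct n)
  case 0
  have "c \<in> form_values 0" if c: "c \<in> carrier R" for c
  proof -
    let ?F = "\<lambda>\<alpha>. if \<alpha> = 0 then c else \<zero>"
    have "is_form 0 ?F" "eval_form 0 ?F = c"
      using c by (auto simp: is_form_def eval_form_def exps_of_deg_0 xpow_zero)
    then show ?thesis using form_valuesI by metis
  qed
  then show ?case by auto
next
  case (Suc n)
  have "ideal_pow R gens_ideal (Suc n) = Idl (ideal_pow R gens_ideal n <#> gens_ideal)"
    using ideal_prod_eq_genideal[OF ideal_pow_is_ideal gens_ideal_is_ideal] gens_ideal_is_ideal by simp
  also have "\<dots> \<subseteq> form_values (Suc n)"
  proof (rule genideal_minimal[OF form_values_is_ideal], rule subsetI)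
    fix s assume "s \<in> ideal_pow R gens_ideal n <#> gens_ideal"
    then obtain F j where F: "is_form n F" and j: "j \<in> gens_ideal" and s: "s = eval_form n F \<otimes> j"
      using Suc unfolding set_mult_def form_values_def by blast
    have "x ` {..<r} \<subseteq> {j \<in> carrier R. eval_form n F \<otimes> j \<in> form_values (Suc n)}"
    proof clarify
      fix i assume i: "i < r"
      have "eval_form n F \<otimes> x i = eval_form (Suc n) (shift_form (unit_exp i) F)"
        using eval_form_shift[OF F unit_exp_in_exps[OF i]] by (simp add: xpow_unit_exp i exp_deg_unit_exp)
      moreover have "is_form (Suc n) (shift_form (unit_exp i) F)"
        using is_form_shift[OF F unit_exp_in_exps[OF i]] by (simp add: exp_deg_unit_exp i)
      ultimately show "x i \<in> carrier R \<and> eval_form n F \<otimes> x i \<in> form_values (Suc n)"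
        using form_valuesI gens_closed by simp
    qed
    then have "gens_ideal \<subseteq> {j \<in> carrier R. eval_form n F \<otimes> j \<in> form_values (Suc n)}"
      unfolding gens_ideal_def
      by (intro genideal_minimal colon_ideal_is_ideal form_values_is_ideal eval_form_closed F)
    then show "s \<in> form_values (Suc n)" using j s by auto
  qed
  finally show ?case .
qed

end

section \<open>The Artin--Rees lemma\<close>

locale forms_ideal = forms +
  fixes I :: "'a set"
  assumes ideal_I: "ideal I R"
begin

definition is_lead_witness :: "(nat \<Rightarrow> nat) \<Rightarrow> ((nat \<Rightarrow> nat) \<Rightarrow> 'a) \<Rightarrow> bool" where
  "is_lead_witness \<alpha> F \<longleftrightarrow> is_form (exp_deg \<alpha>) F \<and> eval_form (exp_deg \<alpha>) F \<in> I \<and>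
     (\<forall>\<gamma>. lex_less \<alpha> \<gamma> \<longrightarrow> F \<gamma> = \<zero>)"

definition lead_coeffs :: "(nat \<Rightarrow> nat) \<Rightarrow> 'a set" where
  "lead_coeffs \<alpha> = {W \<alpha> | W. is_lead_witness \<alpha> W}"

lemma lead_coeffsI: "is_lead_witness \<alpha> F \<Longrightarrow> F \<alpha> \<in> lead_coeffs \<alpha>"
  unfolding lead_coeffs_def by blast

lemma lead_coeffs_is_ideal: "ideal (lead_coeffs \<alpha>) R"
proof (rule ideal_criterion)
  show "lead_coeffs \<alpha> \<subseteq> carrier R"
    unfolding lead_coeffs_def is_lead_witness_def is_form_def by auto
  show "\<zero> \<in> lead_coeffs \<alpha>"
    unfolding lead_coeffs_def is_lead_witness_def
    using is_form_zero eval_form_eq_zero additive_subgroup.zero_closed[OF ideal.axioms(1)[OF ideal_I]]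
    by (intro CollectI exI[of _ "\<lambda>_. \<zero>"]) auto
next
  fix a b assume "a \<in> lead_coeffs \<alpha>" "b \<in> lead_coeffs \<alpha>"
  then obtain F G where "is_lead_witness \<alpha> F" "a = F \<alpha>" "is_lead_witness \<alpha> G" "b = G \<alpha>"
    unfolding lead_coeffs_def by blast
  then have "is_lead_witness \<alpha> (\<lambda>\<beta>. F \<beta> \<oplus> G \<beta>)"
    unfolding is_lead_witness_def
    using is_form_add eval_form_add additive_subgroup.a_closed[OF ideal.axioms(1)[OF ideal_I]] by simp
  then show "a \<oplus> b \<in> lead_coeffs \<alpha>" using lead_coeffsI \<open>a = F \<alpha>\<close> \<open>b = G \<alpha>\<close> by fastforce
next
  fix a c assume "a \<in> lead_coeffs \<alpha>" and c: "c \<in> carrier R"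
  then obtain F where "is_lead_witness \<alpha> F" "a = F \<alpha>"
    unfolding lead_coeffs_def by blast
  then have "is_lead_witness \<alpha> (\<lambda>\<beta>. c \<otimes> F \<beta>)"
    unfolding is_lead_witness_def
    using is_form_smult[OF c] eval_form_smult[OF c] ideal.I_l_closed[OF ideal_I _ c] c by simp
  then show "c \<otimes> a \<in> lead_coeffs \<alpha>" using lead_coeffsI \<open>a = F \<alpha>\<close> by fastforce
qed

lemma is_lead_witness_shift:
  assumes F: "is_lead_witness \<alpha> F" and \<gamma>: "\<gamma> \<in> exps r"
  shows "is_lead_witness (\<alpha> + \<gamma>) (shift_form \<gamma> F)"
  unfolding is_lead_witness_def exp_deg_add
proof (intro conjI allI impI)
  have F': "is_form (exp_deg \<alpha>) F" "eval_form (exp_deg \<alpha>) F \<in> I"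
    using F unfolding is_lead_witness_def by auto
  show "is_form (exp_deg \<alpha> + exp_deg \<gamma>) (shift_form \<gamma> F)"
    using is_form_shift[OF F'(1) \<gamma>] .
  show "eval_form (exp_deg \<alpha> + exp_deg \<gamma>) (shift_form \<gamma> F) \<in> I"
    using eval_form_shift[OF F'(1) \<gamma>] F'(2) ideal.I_r_closed[OF ideal_I] by simp
  fix \<delta> assume "lex_less (\<alpha> + \<gamma>) \<delta>"
  then show "shift_form \<gamma> F \<delta> = \<zero>"
    using F add_diff_exp[of \<gamma> \<delta>] lex_less_add_right[of \<alpha> \<gamma> "\<delta> - \<gamma>"]
    unfolding shift_form_def is_lead_witness_def by (auto simp: add.commute)
qed

lemma lead_coeffs_mono: "mono_on (exps r) lead_coeffs"
proof (rule mono_onI, rule subsetI)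
  fix \<alpha> \<beta> c assume "\<alpha> \<in> exps r" "\<beta> \<in> exps r" "\<alpha> \<le> \<beta>" "c \<in> lead_coeffs \<alpha>"
  then obtain F where "is_lead_witness \<alpha> F" "c = F \<alpha>" unfolding lead_coeffs_def by blast
  then have "is_lead_witness \<beta> (shift_form (\<beta> - \<alpha>) F)" "shift_form (\<beta> - \<alpha>) F \<beta> = c"
    using is_lead_witness_shift[OF _ exps_diff[OF \<open>\<beta> \<in> exps r\<close>]] shift_form_add_apply
      add_diff_exp[OF \<open>\<alpha> \<le> \<beta>\<close>] by metis+
  then show "c \<in> lead_coeffs \<beta>" unfolding lead_coeffs_def by blast
qed

lemma lead_coeffs_eventually_repeat:
  assumes "noetherian_ring R"
  obtains s where "\<And>\<beta>. \<beta> \<in> exps r \<Longrightarrow> s < exp_deg \<beta> \<Longrightarrow>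
    \<exists>\<alpha>\<in>exps r. \<alpha> < \<beta> \<and> lead_coeffs \<alpha> = lead_coeffs \<beta>"
proof -
  let ?B = "{\<beta> \<in> exps r. \<forall>\<alpha>\<in>exps r. \<alpha> < \<beta> \<longrightarrow> lead_coeffs \<alpha> \<noteq> lead_coeffs \<beta>}"
  define s where "s = Max (insert 0 (exp_deg ` ?B))"
  have "finite ?B"
    by (rule noetherian_ring.mono_ideal_family_finite_jumps[OF assms lead_coeffs_is_ideal lead_coeffs_mono])
  then have bound: "exp_deg \<beta> \<le> s" if "\<beta> \<in> ?B" for \<beta>
    unfolding s_def using that by (intro Max_ge) auto
  show thesis
  proof (rule that)
    fix \<beta> assume "\<beta> \<in> exps r" "s < exp_deg \<beta>"
    then have "\<beta> \<notin> ?B" using bound not_le by blast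
    with \<open>\<beta> \<in> exps r\<close> show "\<exists>\<alpha>\<in>exps r. \<alpha> < \<beta> \<and> lead_coeffs \<alpha> = lead_coeffs \<beta>" by simp
  qed
qed

lemma xpow_mult_in_prod:
  assumes "0 < exp_deg \<gamma>" and g: "g \<in> ideal_pow R gens_ideal d \<inter> I"
  shows "xpow \<gamma> \<otimes> g \<in> gens_ideal \<cdot> (ideal_pow R gens_ideal (exp_deg \<gamma> + d - 1) \<inter> I)"
proof -
  obtain i \<gamma>' where i: "i < r" "\<gamma> = \<gamma>' + unit_exp i" "exp_deg \<gamma> = Suc (exp_deg \<gamma>')"
    using exp_deg_pos_split[OF assms(1)] .
  have gc: "g \<in> carrier R" using g ideal.Icarr[OF ideal_I] by blast
  have "xpow \<gamma> \<otimes> g = x i \<otimes> (xpow \<gamma>' \<otimes> g)"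
    using i gc gens_closed by (simp add: xpow_add xpow_unit_exp m_ac)
  moreover have "xpow \<gamma>' \<otimes> g \<in> I"
    using ideal.I_l_closed[OF ideal_I] g by simp
  moreover have "xpow \<gamma>' \<otimes> g \<in> ideal_pow R gens_ideal (exp_deg \<gamma>') \<cdot> ideal_pow R gens_ideal d"
    using xpow_in_ideal_pow g by (auto intro: ideal_prod.prod)
  then have "xpow \<gamma>' \<otimes> g \<in> ideal_pow R gens_ideal (exp_deg \<gamma> + d - 1)"
    using ideal_pow_add[OF gens_ideal_is_ideal] i(3) by simp
  ultimately show ?thesis using gens_in_gens_ideal[OF i(1)] by (auto intro: ideal_prod.prod)
qed

text \<open>If the leading coefficient ideal at \<open>\<beta>\<close> already occurs at some \<open>\<alpha> < \<beta>\<close>, the leading term of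
  \<open>F\<close> is also that of \<open>x^(\<beta> - \<alpha>)\<close> times a form of lower degree with value in \<open>I\<close>.\<close>

lemma cancel_lead_term:
  assumes F: "is_lead_witness \<beta> F" and \<beta>: "\<beta> \<in> exps r"
    and \<alpha>: "\<alpha> \<in> exps r" "\<alpha> < \<beta>" "lead_coeffs \<alpha> = lead_coeffs \<beta>"
  obtains H where "is_lead_witness \<beta> H" "H \<beta> = F \<beta>"
    "eval_form (exp_deg \<beta>) H \<in> gens_ideal \<cdot> (ideal_pow R gens_ideal (exp_deg \<beta> - 1) \<inter> I)"
proof -
  have "F \<beta> \<in> lead_coeffs \<alpha>" using lead_coeffsI[OF F] \<alpha>(3) by simp
  then obtain G where G: "is_lead_witness \<alpha> G" "F \<beta> = G \<alpha>" unfolding lead_coeffs_def by blast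
  have G': "is_form (exp_deg \<alpha>) G" "eval_form (exp_deg \<alpha>) G \<in> I"
    using G(1) unfolding is_lead_witness_def by auto
  define \<gamma> where "\<gamma> = \<beta> - \<alpha>"
  have \<gamma>: "\<gamma> \<in> exps r" "\<alpha> + \<gamma> = \<beta>"
    unfolding \<gamma>_def using exps_diff[OF \<beta>] add_diff_exp \<alpha>(2) by auto
  then have deg: "exp_deg \<beta> = exp_deg \<gamma> + exp_deg \<alpha>" using exp_deg_add[of \<alpha> \<gamma>] by simp
  obtain i where "i < r" "\<alpha> i < \<beta> i" using less_exps_ex_coord[OF \<beta> \<alpha>(2)] .
  then have "0 < exp_deg \<gamma>"
    unfolding exp_deg_def \<gamma>_def using member_le_sum[of i "{..<r}" "\<beta> - \<alpha>"] by auto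
  let ?H = "shift_form \<gamma> G"
  have "is_lead_witness \<beta> ?H" "?H \<beta> = F \<beta>"
    using is_lead_witness_shift[OF G(1) \<gamma>(1)] shift_form_add_apply[of \<gamma> G \<alpha>] G(2) \<gamma>(2) by simp_all
  moreover have "eval_form (exp_deg \<beta>) ?H = xpow \<gamma> \<otimes> eval_form (exp_deg \<alpha>) G"
    using eval_form_shift[OF G'(1) \<gamma>(1)] deg G'(1) m_comm[OF eval_form_closed[OF G'(1)] xpow_closed]
    by (simp add: add.commute)
  moreover have "eval_form (exp_deg \<alpha>) G \<in> ideal_pow R gens_ideal (exp_deg \<alpha>) \<inter> I"
    using eval_form_in_ideal_pow[OF G'(1)] G'(2) by blast
  ultimately show thesis
    using that xpow_mult_in_prod[OF \<open>0 < exp_deg \<gamma>\<close>] deg by simp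
qed

end

context forms
begin

definition lex_support_downset :: "nat \<Rightarrow> ((nat \<Rightarrow> nat) \<Rightarrow> 'a) \<Rightarrow> (nat \<Rightarrow> nat) set" where
  "lex_support_downset n F =
     {\<gamma> \<in> exps_of_deg n. \<exists>\<delta>\<in>exps_of_deg n. F \<delta> \<noteq> \<zero> \<and> (\<gamma> = \<delta> \<or> lex_less \<gamma> \<delta>)}"

lemma lex_support_downset_psubset:
  assumes "\<beta> \<in> exps_of_deg n" "F \<beta> \<noteq> \<zero>" and G: "\<And>\<delta>. \<delta> = \<beta> \<or> lex_less \<beta> \<delta> \<Longrightarrow> G \<delta> = \<zero>"
  shows "lex_support_downset n G \<subset> lex_support_downset n F"
proof -
  have "lex_support_downset n G \<subseteq> lex_support_downset n F - {\<beta>}"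
  proof
    fix \<eta> assume "\<eta> \<in> lex_support_downset n G"
    then obtain \<delta> where \<delta>: "\<eta> \<in> exps_of_deg n" "G \<delta> \<noteq> \<zero>" "\<eta> = \<delta> \<or> lex_less \<eta> \<delta>"
      unfolding lex_support_downset_def by blast
    then have "lex_less \<delta> \<beta>" using G lex_less_linear by blast
    then have "lex_less \<eta> \<beta>" using \<delta>(3) lex_less_trans by blast
    then show "\<eta> \<in> lex_support_downset n F - {\<beta>}"
      using \<delta>(1) assms(1,2) lex_less_irrefl unfolding lex_support_downset_def by blast
  qed
  moreover have "\<beta> \<in> lex_support_downset n F" using assms(1,2) unfolding lex_support_downset_def by blast
  ultimately show ?thesis by blast
qed

lemma finite_lex_support_downset: "finite (lex_support_downset n F)"
  unfolding lex_support_downset_def using finite_exps_of_deg by simp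

lemma exists_lead_exp:
  assumes F: "is_form n F" and "\<delta> \<in> exps_of_deg n" "F \<delta> \<noteq> \<zero>"
  obtains \<beta> where "\<beta> \<in> exps_of_deg n" "F \<beta> \<noteq> \<zero>" "\<And>\<gamma>. lex_less \<beta> \<gamma> \<Longrightarrow> F \<gamma> = \<zero>"
proof -
  let ?S = "{\<delta> \<in> exps_of_deg n. F \<delta> \<noteq> \<zero>}"
  have "finite ?S" "?S \<noteq> {}" using finite_exps_of_deg assms(2,3) by auto
  then obtain \<beta> where "\<beta> \<in> ?S" "\<forall>\<gamma>\<in>?S. \<not> lex_less \<beta> \<gamma>" using finite_lex_maximal by blast
  moreover have "F \<gamma> = \<zero>" if "\<gamma> \<notin> ?S" for \<gamma> using that F unfolding is_form_def by auto
  ultimately show thesis using that by blast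
qed

end

context forms_ideal
begin

lemma lead_term_reduction:
  assumes repeat: "\<And>\<beta>. \<beta> \<in> exps r \<Longrightarrow> s < exp_deg \<beta> \<Longrightarrow>
      \<exists>\<alpha>\<in>exps r. \<alpha> < \<beta> \<and> lead_coeffs \<alpha> = lead_coeffs \<beta>"
    and "s < n" and F: "is_form n F" "eval_form n F \<in> I"
    and \<beta>: "\<beta> \<in> exps_of_deg n" "F \<beta> \<noteq> \<zero>" and top: "\<And>\<gamma>. lex_less \<beta> \<gamma> \<Longrightarrow> F \<gamma> = \<zero>"
  obtains F' h where "is_form n F'" "eval_form n F' \<in> I"
    "card (lex_support_downset n F') < card (lex_support_downset n F)"
    "h \<in> gens_ideal \<cdot> (ideal_pow R gens_ideal (n - 1) \<inter> I)" "eval_form n F = eval_form n F' \<oplus> h"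
proof -
  have \<beta>': "\<beta> \<in> exps r" "exp_deg \<beta> = n" using \<beta>(1) unfolding exps_of_deg_def by auto
  have "is_lead_witness \<beta> F"
    using F top \<beta>' unfolding is_lead_witness_def by blast
  moreover obtain \<alpha> where "\<alpha> \<in> exps r" "\<alpha> < \<beta>" "lead_coeffs \<alpha> = lead_coeffs \<beta>"
    using repeat \<beta>' \<open>s < n\<close> by blast
  ultimately obtain H where H: "is_lead_witness \<beta> H" "H \<beta> = F \<beta>"
      "eval_form n H \<in> gens_ideal \<cdot> (ideal_pow R gens_ideal (n - 1) \<inter> I)"
    using cancel_lead_term \<beta>' by metis
  have H': "is_form n H" "eval_form n H \<in> I"
    using H \<beta>'(2) unfolding is_lead_witness_def by auto
  define F' where "F' = (\<lambda>\<delta>. F \<delta> \<ominus> H \<delta>)"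
  have F': "is_form n F'" "eval_form n F' = eval_form n F \<ominus> eval_form n H"
    unfolding F'_def using is_form_minus eval_form_minus F(1) H'(1) by auto
  have "eval_form n F' \<in> I"
    using F'(2) F(2) H'(2) ideal_I
    by (simp add: additive_subgroup.a_closed additive_subgroup.a_inv_closed ideal.axioms(1) minus_eq)
  moreover have "F' \<delta> = \<zero>" if "\<delta> = \<beta> \<or> lex_less \<beta> \<delta>" for \<delta>
    using that top H(1,2) F(1) H'(1)
    unfolding F'_def is_lead_witness_def is_form_def by (auto simp: r_neg minus_eq)
  then have "card (lex_support_downset n F') < card (lex_support_downset n F)"
    by (intro psubset_card_mono finite_lex_support_downset
        lex_support_downset_psubset[where F = F, OF \<beta>(1,2)])
  moreover have "eval_form n F = eval_form n F' \<oplus> eval_form n H"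
    unfolding F'(2) using F(1) H'(1) by (simp add: minus_eq a_assoc l_neg)
  ultimately show thesis using that F'(1) H(3) by blast
qed

lemma form_value_in_prod:
  assumes repeat: "\<And>\<beta>. \<beta> \<in> exps r \<Longrightarrow> s < exp_deg \<beta> \<Longrightarrow>
      \<exists>\<alpha>\<in>exps r. \<alpha> < \<beta> \<and> lead_coeffs \<alpha> = lead_coeffs \<beta>"
    and "s < n"
  shows "is_form n F \<Longrightarrow> eval_form n F \<in> I \<Longrightarrow>
    eval_form n F \<in> gens_ideal \<cdot> (ideal_pow R gens_ideal (n - 1) \<inter> I)"
proof (induct "card (lex_support_downset n F)" arbitrary: F rule: less_induct)
  case less
  let ?V = "gens_ideal \<cdot> (ideal_pow R gens_ideal (n - 1) \<inter> I)"
  have V: "additive_subgroup ?V R"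
    by (intro ideal.axioms(1) ideal_prod_is_ideal gens_ideal_is_ideal i_intersect ideal_I ideal_pow_is_ideal)
  show ?case
  proof (cases "\<forall>\<delta>\<in>exps_of_deg n. F \<delta> = \<zero>")
    case True
    then show ?thesis using eval_form_eq_zero additive_subgroup.zero_closed[OF V] by simp
  next
    case False
    then obtain \<beta> where "\<beta> \<in> exps_of_deg n" "F \<beta> \<noteq> \<zero>" "\<And>\<gamma>. lex_less \<beta> \<gamma> \<Longrightarrow> F \<gamma> = \<zero>"
      using exists_lead_exp[OF less.prems(1)] by blast
    then obtain F' h where F': "is_form n F'" "eval_form n F' \<in> I"
        "card (lex_support_downset n F') < card (lex_support_downset n F)"
      and h: "h \<in> ?V" "eval_form n F = eval_form n F' \<oplus> h"
      using lead_term_reduction[OF repeat \<open>s < n\<close> less.prems] by blast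
    then have "eval_form n F' \<in> ?V" using less.hyps by blast
    then show ?thesis using h additive_subgroup.a_closed[OF V] by simp
  qed
qed

lemma artin_rees_step:
  assumes "noetherian_ring R"
  shows "\<exists>s. \<forall>n>s.
    ideal_pow R gens_ideal n \<inter> I \<subseteq> gens_ideal \<cdot> (ideal_pow R gens_ideal (n - 1) \<inter> I)"
proof -
  obtain s where repeat: "\<And>\<beta>. \<beta> \<in> exps r \<Longrightarrow> s < exp_deg \<beta> \<Longrightarrow>
      \<exists>\<alpha>\<in>exps r. \<alpha> < \<beta> \<and> lead_coeffs \<alpha> = lead_coeffs \<beta>"
    using lead_coeffs_eventually_repeat[OF assms] by blast
  have "ideal_pow R gens_ideal n \<inter> I \<subseteq> gens_ideal \<cdot> (ideal_pow R gens_ideal (n - 1) \<inter> I)"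
    if "s < n" for n
  proof
    fix y assume y: "y \<in> ideal_pow R gens_ideal n \<inter> I"
    then obtain F where "is_form n F" "y = eval_form n F"
      using ideal_pow_subset_form_values unfolding form_values_def by blast
    then show "y \<in> gens_ideal \<cdot> (ideal_pow R gens_ideal (n - 1) \<inter> I)"
      using form_value_in_prod[OF repeat that] y by blast
  qed
  then show ?thesis by blast
qed

end

lemma (in cring) artin_rees_of_step:
  assumes m: "ideal m R" and I: "ideal I R"
    and step: "\<And>n. s < n \<Longrightarrow> ideal_pow R m n \<inter> I \<subseteq> m \<cdot> (ideal_pow R m (n - 1) \<inter> I)"
  shows "\<forall>n\<ge>Suc s. ideal_pow R m n \<inter> I = ideal_pow R m (n - Suc s) \<cdot> (ideal_pow R m (Suc s) \<inter> I)"
proof -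
  let ?X = "ideal_pow R m (Suc s) \<inter> I"
  have X: "ideal ?X R" by (intro i_intersect ideal_pow_is_ideal m I)
  have "ideal_pow R m (Suc s + k) \<inter> I = ideal_pow R m k \<cdot> ?X" for k
  proof (induct k)
    case 0
    then show ?case using ideal_prod_commute[OF oneideal X] ideal_prod_one[OF X] by simp
  next
    case (Suc k)
    show ?case
    proof
      have "ideal_pow R m (Suc s + Suc k) \<inter> I \<subseteq> m \<cdot> (ideal_pow R m (Suc s + k) \<inter> I)"
        using step[of "Suc s + Suc k"] by simp
      also have "\<dots> = (m \<cdot> ideal_pow R m k) \<cdot> ?X"
        using Suc ideal_prod_assoc[OF m ideal_pow_is_ideal[OF m] X] by simp
      finally show "ideal_pow R m (Suc s + Suc k) \<inter> I \<subseteq> ideal_pow R m (Suc k) \<cdot> ?X"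
        using ideal_pow_Suc_left[OF m] by simp
    next
      have "ideal_pow R m (Suc k) \<cdot> ?X \<subseteq> ideal_pow R m (Suc k) \<cdot> ideal_pow R m (Suc s)"
        by (rule ideal_prod_mono) auto
      also have "\<dots> = ideal_pow R m (Suc s + Suc k)"
        unfolding ideal_pow_add[OF m] by (simp only: add.commute)
      finally have "ideal_pow R m (Suc k) \<cdot> ?X \<subseteq> ideal_pow R m (Suc s + Suc k)" .
      moreover have "ideal_pow R m (Suc k) \<cdot> ?X \<subseteq> I"
        using ideal_prod_inter[OF ideal_pow_is_ideal[OF m] X] by blast
      ultimately show "ideal_pow R m (Suc k) \<cdot> ?X \<subseteq> ideal_pow R m (Suc s + Suc k) \<inter> I" by blast
    qed
  qed
  then show ?thesis by (metis le_add_diff_inverse)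
qed

lemma (in cring) artin_rees:
  assumes noeth: "noetherian_ring R" and m: "ideal m R" and I: "ideal I R"
  shows "\<exists>s. \<forall>n\<ge>s. ideal_pow R m n \<inter> I = ideal_pow R m (n - s) \<cdot> (ideal_pow R m s \<inter> I)"
proof -
  obtain X where X: "X \<subseteq> carrier R" "finite X" "m = Idl X"
    using noetherian_ring.finetely_gen[OF noeth m] by blast
  obtain r and e :: "nat \<Rightarrow> 'a" where "X = e ` {i. i < r}"
    using finite_imp_nat_seg_image_inj_on[OF X(2)] by blast
  then have e: "X = e ` {..<r}" by (simp add: lessThan_def)
  define x where "x i = (if i < r then e i else \<zero>)" for i
  have "x i \<in> carrier R" for i using X(1) e by (auto simp: x_def)
  then interpret forms_ideal R r x I
    by (intro forms_ideal.intro forms.intro forms_axioms.intro forms_ideal_axioms.intro is_cring I)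
  have "gens_ideal = m"
    unfolding gens_ideal_def X(3) e x_def by (intro arg_cong[where f = "genideal R"]) auto
  moreover obtain s where "\<forall>n>s.
      ideal_pow R gens_ideal n \<inter> I \<subseteq> gens_ideal \<cdot> (ideal_pow R gens_ideal (n - 1) \<inter> I)"
    using artin_rees_step[OF noeth] by blast
  ultimately show ?thesis using artin_rees_of_step[OF m I, of s] by blast
qed

section \<open>Minimal numbers of generators\<close>

context cring
begin

lemma AR_number_spec:
  assumes "noetherian_ring R" "ideal m R" "ideal I R"
  shows "\<forall>n\<ge>AR_number R m I.
    ideal_pow R m n \<inter> I = ideal_pow R m (n - AR_number R m I) \<cdot> (ideal_pow R m (AR_number R m I) \<inter> I)"
  unfolding AR_number_def by (rule LeastI_ex[OF artin_rees[OF assms]])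

lemma ideal_pow_inter_subset_prod:
  assumes noeth: "noetherian_ring R" and m: "ideal m R" and I: "ideal I R"
    and N: "AR_number R m I < N"
  shows "ideal_pow R m N \<inter> I \<subseteq> m \<cdot> I"
proof -
  let ?s = "AR_number R m I"
  have "ideal_pow R m N \<inter> I = ideal_pow R m (N - ?s) \<cdot> (ideal_pow R m ?s \<inter> I)"
    using N by (intro AR_number_spec[OF noeth m I, rule_format]) simp
  also have "\<dots> = ideal_pow R m (Suc (N - ?s - 1)) \<cdot> (ideal_pow R m ?s \<inter> I)"
    using N by (simp only: Suc_diff_1 zero_less_diff)
  also have "\<dots> \<subseteq> m \<cdot> I"
    by (intro ideal_prod_mono ideal_pow_Suc_subset[OF m]) auto
  finally show ?thesis .
qed

lemma lift_generators:
  assumes I: "ideal I R" and L: "ideal L R" and S: "finite S" "S \<subseteq> I <+> L"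
  obtains T where "T \<subseteq> I" "finite T" "card T \<le> card S" "S \<subseteq> Idl T <+> L"
proof -
  have "\<forall>g\<in>S. \<exists>a. a \<in> I \<and> (\<exists>b\<in>L. g = a \<oplus> b)"
    using S(2) unfolding subset_iff mem_set_add_iff by blast
  then obtain f where f: "\<forall>g\<in>S. f g \<in> I \<and> (\<exists>b\<in>L. g = f g \<oplus> b)"
    using bchoice[of S "\<lambda>g a. a \<in> I \<and> (\<exists>b\<in>L. g = a \<oplus> b)"] by blast
  have Tc: "f ` S \<subseteq> carrier R" using f ideal.Icarr[OF I] by blast
  have "S \<subseteq> Idl (f ` S) <+> L"
  proof
    fix g assume g: "g \<in> S"
    then obtain b where "b \<in> L" "g = f g \<oplus> b" using f by blast
    moreover have "f g \<in> Idl (f ` S)" using genideal_self[OF Tc] g by blast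
    ultimately show "g \<in> Idl (f ` S) <+> L" unfolding mem_set_add_iff by blast
  qed
  moreover have "f ` S \<subseteq> I" "card (f ` S) \<le> card S" using f card_image_le[OF S(1)] by auto
  ultimately show thesis using that S(1) by blast
qed

end

lemma (in ring) min_gens_le_card:
  "finite S \<Longrightarrow> S \<subseteq> carrier R \<Longrightarrow> min_gens R (Idl S) \<le> card S"
  unfolding min_gens_def by (rule Least_le) blast

lemma (in noetherian_ring) min_gens_attained:
  assumes "ideal J R"
  obtains S where "finite S" "card S = min_gens R J" "S \<subseteq> carrier R" "Idl S = J"
proof -
  let ?P = "\<lambda>n. \<exists>S. finite S \<and> card S = n \<and> S \<subseteq> carrier R \<and> Idl S = J"
  obtain S where "S \<subseteq> carrier R" "finite S" "J = Idl S" using finetely_gen[OF assms] by blast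
  then have "?P (card S)" by blast
  then have "?P (min_gens R J)" unfolding min_gens_def by (rule LeastI)
  then show thesis using that by blast
qed

lemma (in cring) min_gens_le_of_eq_mod_ideal_pow:
  assumes noeth: "noetherian_ring R" and loc: "local_ring R m"
    and I: "ideal I R" and J: "ideal J R" and N: "N > AR_number R m I"
    and eq: "I <+> ideal_pow R m N = J <+> ideal_pow R m N"
  shows "min_gens R I \<le> min_gens R J"
proof -
  have m: "ideal m R" using loc unfolding local_ring_def maximalideal_def by blast
  let ?L = "ideal_pow R m N"
  have L: "ideal ?L R" by (rule ideal_pow_is_ideal[OF m])
  have Ic: "I \<subseteq> carrier R" and Jc: "J \<subseteq> carrier R" and Lc: "?L \<subseteq> carrier R"
    using ideal.Icarr[OF I] ideal.Icarr[OF J] ideal.Icarr[OF L] by blast+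
  obtain S where S: "finite S" "card S = min_gens R J" "S \<subseteq> carrier R" "Idl S = J"
    using noetherian_ring.min_gens_attained[OF noeth J] by blast
  have "S \<subseteq> J" using genideal_self[OF S(3)] S(4) by simp
  also have "J \<subseteq> I <+> ?L" using subset_set_add_left[OF L Jc] eq by simp
  finally obtain T where T: "T \<subseteq> I" "finite T" "card T \<le> card S" "S \<subseteq> Idl T <+> ?L"
    using lift_generators[OF I L S(1)] by blast
  have Tc: "T \<subseteq> carrier R" using T(1) Ic by blast
  have K: "ideal (Idl T) R" "Idl T \<subseteq> I" using genideal_ideal[OF Tc] genideal_minimal[OF I T(1)] .
  have KL: "ideal (Idl T <+> ?L) R" by (rule add_ideals[OF K(1) L])
  have "J \<subseteq> Idl T <+> ?L" using genideal_minimal[OF KL T(4)] S(4) by simp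
  then have "J <+> ?L \<subseteq> Idl T <+> ?L"
    using set_add_subset_ideal[OF KL] subset_set_add_right[OF K(1) Lc] by blast
  then have "I \<subseteq> Idl T <+> ?L" using subset_set_add_left[OF L Ic] eq by simp
  then have "I \<subseteq> Idl T <+> (?L \<inter> I)" by (rule subset_set_add_inter[OF I K(2) Lc])
  also have "\<dots> \<subseteq> Idl T <+> m \<cdot> I"
    using set_add_mono[OF subset_refl ideal_pow_inter_subset_prod[OF noeth m I N]] .
  finally have "I = Idl T" by (rule nakayama[OF loc noeth K(1) I K(2)])
  then have "min_gens R I \<le> card T" using min_gens_le_card[OF T(2) Tc] by simp
  with T(3) S(2) show ?thesis by simp
qed

theorem proposition3p4:
  fixes R :: "('a, 'b) ring_scheme" and m I J :: "'a set" and N :: nat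
  assumes "noetherian_ring R"
    and "local_ring R m"
    and "ideal I R"
    and "ideal J R"
    and "N > AR_number R m I"
    and "set_add R I (ideal_pow R m N) = set_add R J (ideal_pow R m N)"
  shows "min_gens R I \<le> min_gens R J"
  using assms(2) unfolding local_ring_def
  by (blast intro: cring.min_gens_le_of_eq_mod_ideal_pow[OF _ assms])

end
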